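(* Let $\mathbf{k}$ be a field, $p\ge3$ an integer, and let $\varphi:\mathbf{k}[e_1,\dots,e_{2p}]\to\mathbf{k}[u_1,\dots,u_p,\alpha]$ be the $\mathbf{k}$-algebra homomorphism with $\varphi(e_i)=u_i$ for $1\le i\le p-1$, $\varphi(e_p)=u_p+\alpha$, $\varphi(e_i)=u_{i-p}\alpha$ for $p+1\le i\le 2p$, and $\mathcal{A}=\operatorname{Im}(\varphi)$. Grade $\mathbf{k}[u_1,\dots,u_p,\alpha]$ by $\mathbb{Z}^p$ with $\deg(u_i)=\epsilon_i$ and $\deg(\alpha)=\epsilon_p$, and fix any monomial order on $\mathbf{k}[u_1,\dots,u_p,\alpha]$ in which $\alpha\prec u_p$. Then for $\underline{d}=(d_1,\dots,d_p)\in\mathbb{Z}_{\ge0}^p$, $$\dim_{\mathbf{k}}(\mathrm{in}(\mathcal{A}))_{\underline{d}}=\begin{cases} d_p+1 & \text{if } d_i>0 \text{ for some } 1\le i\le p-1,\\ 1+\lfloor d_p/2\rfloor & \text{if } d_i=0 \text{ for all } 1\le i\le p-1.\end{cases}$$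
   Context: $\epsilon_i$ denotes the $i$-th standard basis vector of $\mathbb{Z}^p$. The initial algebra $\mathrm{in}(\mathcal{A})$ is the $\mathbf{k}$-span of the leading monomials of the nonzero elements of $\mathcal{A}$; $(\mathrm{in}(\mathcal{A}))_{\underline d}$ is its span of monomials of multidegree $\underline d$. *)

theory Defs
  imports Main "HOL.Vector_Spaces" "HOL-Library.Poly_Mapping"
begin

(* In k[u_1,...,u_p,alpha]
  the variable u_i is variable number i (1 <= i <= p) and alpha is variable number 0.
  In k[e_1,...,e_2p] the variable e_i is variable number i. *)

type_synonym 'k mpoly = "(nat \<Rightarrow>\<^sub>0 nat) \<Rightarrow>\<^sub>0 'k"

definition Var :: "nat \<Rightarrow> 'k::comm_ring_1 mpoly" where
  "Var v = Poly_Mapping.single (Poly_Mapping.single v 1) 1"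

definition Const :: "'k::comm_ring_1 \<Rightarrow> 'k mpoly" where
  "Const c = Poly_Mapping.single 0 c"

definition scale :: "'k::field \<Rightarrow> 'k mpoly \<Rightarrow> 'k mpoly" where
  "scale c f = Const c * f"

definition polys_in :: "nat set \<Rightarrow> 'k::comm_ring_1 mpoly set" where
  "polys_in V = {f::'k mpoly. \<forall>m\<in>Poly_Mapping.keys f. Poly_Mapping.keys m \<subseteq> V}"

definition subst :: "(nat \<Rightarrow> 'k::comm_ring_1 mpoly) \<Rightarrow> 'k mpoly \<Rightarrow> 'k mpoly" where
  "subst g f = (\<Sum>m\<in>Poly_Mapping.keys f. Const (Poly_Mapping.lookup f m) * (\<Prod>v\<in>Poly_Mapping.keys m. g v ^ Poly_Mapping.lookup m v))"

definition phi_gen :: "nat \<Rightarrow> nat \<Rightarrow> 'k::comm_ring_1 mpoly" where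
  "phi_gen p i =
     (if 1 \<le> i \<and> i \<le> p - 1 then Var i
      else if i = p then Var p + Var 0
      else if p + 1 \<le> i \<and> i \<le> 2 * p then Var (i - p) * Var 0
      else 0)"

definition algA :: "nat \<Rightarrow> 'k::comm_ring_1 mpoly set" where
  "algA p = subst (phi_gen p) ` polys_in {1..2*p}"

definition monomial_order :: "nat set \<Rightarrow> ((nat \<Rightarrow>\<^sub>0 nat) \<Rightarrow> (nat \<Rightarrow>\<^sub>0 nat) \<Rightarrow> bool) \<Rightarrow> bool" where
  "monomial_order V le \<longleftrightarrow>
     (let M = {m. Poly_Mapping.keys m \<subseteq> V} in
       (\<forall>a\<in>M. le a a) \<and>
       (\<forall>a\<in>M. \<forall>b\<in>M. le a b \<and> le b a \<longrightarrow> a = b) \<and>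
       (\<forall>a\<in>M. \<forall>b\<in>M. \<forall>c\<in>M. le a b \<and> le b c \<longrightarrow> le a c) \<and>
       (\<forall>a\<in>M. \<forall>b\<in>M. le a b \<or> le b a) \<and>
       (\<forall>a\<in>M. \<forall>b\<in>M. \<forall>c\<in>M. le a b \<longrightarrow> le (a + c) (b + c)) \<and>
       (\<forall>S\<subseteq>M. S \<noteq> {} \<longrightarrow> (\<exists>x\<in>S. \<forall>y\<in>S. le x y)))"

definition lead_mon :: "((nat \<Rightarrow>\<^sub>0 nat) \<Rightarrow> (nat \<Rightarrow>\<^sub>0 nat) \<Rightarrow> bool) \<Rightarrow> 'k::zero mpoly \<Rightarrow> (nat \<Rightarrow>\<^sub>0 nat)" where
  "lead_mon le f = (THE m. m \<in> Poly_Mapping.keys f \<and> (\<forall>m'\<in>Poly_Mapping.keys f. le m' m))"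

definition init_mons :: "((nat \<Rightarrow>\<^sub>0 nat) \<Rightarrow> (nat \<Rightarrow>\<^sub>0 nat) \<Rightarrow> bool) \<Rightarrow> 'k::zero mpoly set \<Rightarrow> (nat \<Rightarrow>\<^sub>0 nat) set" where
  "init_mons le A = {lead_mon le f | f. f \<in> A \<and> f \<noteq> 0}"

text \<open>Z^p-multidegree: deg u_i = eps_i, deg alpha = eps_p (components indexed 1..p)\<close>
definition mdeg :: "nat \<Rightarrow> (nat \<Rightarrow>\<^sub>0 nat) \<Rightarrow> nat \<Rightarrow> nat" where
  "mdeg p m i = (if i = p then Poly_Mapping.lookup m p + Poly_Mapping.lookup m 0 else Poly_Mapping.lookup m i)"

text \<open>monomials spanning (in(A))_d\<close>
definition init_part_mons ::
  "((nat \<Rightarrow>\<^sub>0 nat) \<Rightarrow> (nat \<Rightarrow>\<^sub>0 nat) \<Rightarrow> bool) \<Rightarrow> 'k::comm_ring_1 mpoly set \<Rightarrow> nat \<Rightarrow> (nat \<Rightarrow> nat) \<Rightarrow> 'k mpoly set" where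
  "init_part_mons le A p d =
     {Poly_Mapping.single m 1 | m. m \<in> init_mons le A \<and> Poly_Mapping.keys m \<subseteq> {0..p} \<and> (\<forall>i\<in>{1..p}. mdeg p m i = d i)}"

end

theory Submission
  imports Defs "HOL-Combinatorics.Transposition"
begin

text \<open>If some \<open>u\<^sub>i\<close> with \<open>i < p\<close> occurs in a monomial of multidegree \<open>d\<close>, the monomial
  already lies in \<open>A\<close>: \<open>A\<close> contains \<open>u\<^sub>i\<close> and \<open>u\<^sub>i \<alpha>\<close>, and multiplying by \<open>u\<^sub>p + \<alpha>\<close> and
  \<open>u\<^sub>p \<alpha>\<close> reaches every \<open>u\<^sub>i u\<^sub>p\<^sup>c \<alpha>\<^sup>e\<close>. Hence all \<open>d\<^sub>p + 1\<close> monomials of multidegree \<open>d\<close>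
  are initial monomials.

  Otherwise these monomials are the \<open>u\<^sub>p\<^sup>c \<alpha>\<^sup>e\<close> with \<open>c + e = d\<^sub>p\<close>. Setting
  \<open>u\<^sub>1, \<dots>, u\<^sub>p\<^sub>-\<^sub>1\<close> to zero maps \<open>A\<close> into the polynomials symmetric in \<open>u\<^sub>p\<close> and \<open>\<alpha>\<close>, so
  every element of \<open>A\<close> has equal coefficients at \<open>u\<^sub>p\<^sup>c \<alpha>\<^sup>e\<close> and \<open>u\<^sub>p\<^sup>e \<alpha>\<^sup>c\<close>; as
  \<open>\<alpha> \<prec> u\<^sub>p\<close>, a leading monomial of this shape has \<open>e \<le> c\<close>. Conversely, for \<open>e \<le> c\<close> the
  monomial \<open>u\<^sub>p\<^sup>c \<alpha>\<^sup>e\<close> leads \<open>(u\<^sub>p \<alpha>)\<^sup>e (u\<^sub>p\<^sup>c\<^sup>-\<^sup>e + \<alpha>\<^sup>c\<^sup>-\<^sup>e) \<in> A\<close>, the power sums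
  lying in \<open>A\<close> by Newton's recurrence. This leaves \<open>1 + \<lfloor>d\<^sub>p / 2\<rfloor>\<close> monomials.
  The argument only needs \<open>p \<ge> 1\<close>.\<close>

abbreviation keys :: "('a \<Rightarrow>\<^sub>0 'b::zero) \<Rightarrow> 'a set" where
  "keys \<equiv> Poly_Mapping.keys"
abbreviation lookup :: "('a \<Rightarrow>\<^sub>0 'b::zero) \<Rightarrow> 'a \<Rightarrow> 'b" where
  "lookup \<equiv> Poly_Mapping.lookup"
abbreviation single :: "'a \<Rightarrow> 'b \<Rightarrow> 'a \<Rightarrow>\<^sub>0 'b::zero" where
  "single \<equiv> Poly_Mapping.single"

section \<open>Substitution homomorphisms\<close>

lemma Const_zero [simp]: "Const 0 = (0 :: 'k::comm_ring_1 mpoly)"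
  by (simp add: Const_def)

lemma Const_one [simp]: "Const 1 = (1 :: 'k::comm_ring_1 mpoly)"
  by (simp add: Const_def)

lemma Const_add: "Const (a + b) = Const a + (Const b :: 'k::comm_ring_1 mpoly)"
  by (simp add: Const_def single_add)

lemma Const_mult: "Const (a * b) = Const a * (Const b :: 'k::comm_ring_1 mpoly)"
  by (simp add: Const_def mult_single)

lemma lookup_Const_mult: "lookup (Const c * f) m = c * lookup (f :: 'k::comm_ring_1 mpoly) m"
  by (simp add: Const_def mult_map_scale_conv_mult[symmetric] Poly_Mapping.map.rep_eq when_def)

lemma vector_space_scale: "vector_space (scale :: 'k::field \<Rightarrow> 'k mpoly \<Rightarrow> 'k mpoly)"
  by unfold_locales (simp_all add: scale_def Const_add Const_mult algebra_simps)

lemma sum_single_lookup: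
  fixes f :: "'a \<Rightarrow>\<^sub>0 'b::comm_monoid_add"
  assumes "finite K" "keys f \<subseteq> K"
  shows "(\<Sum>m\<in>K. single m (lookup f m)) = f"
proof (rule poly_mapping_eqI)
  fix k
  have "lookup (\<Sum>m\<in>K. single m (lookup f m)) k = (\<Sum>m\<in>K. if m = k then lookup f m else 0)"
    by (simp add: lookup_sum lookup_single when_def eq_commute)
  also have "\<dots> = lookup f k"
    using assms by (auto simp: in_keys_iff)
  finally show "lookup (\<Sum>m\<in>K. single m (lookup f m)) k = lookup f k" .
qed

lemma prod_single_one:
  "(\<Prod>v\<in>K. single (h v) (1::'b::comm_semiring_1)) = single (\<Sum>v\<in>K. h v :: 'a::comm_monoid_add) 1"
  by (induction K rule: infinite_finite_induct) (simp_all add: mult_single)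

lemma Var_power: "Var v ^ k = (single (single v k) 1 :: 'k::comm_ring_1 mpoly)"
  by (induction k) (simp_all add: Var_def mult_single single_add[symmetric])

lemma Var_mult_Var_power: "(Var v * Var w) ^ k = (single (single v k + single w k) 1 :: 'k::comm_ring_1 mpoly)"
  by (simp add: power_mult_distrib Var_power mult_single)

definition subst_monom :: "(nat \<Rightarrow> 'k::comm_ring_1 mpoly) \<Rightarrow> (nat \<Rightarrow>\<^sub>0 nat) \<Rightarrow> 'k mpoly" where
  "subst_monom g m = (\<Prod>v\<in>keys m. g v ^ lookup m v)"

lemma subst_monom_superset:
  "finite K \<Longrightarrow> keys m \<subseteq> K \<Longrightarrow> subst_monom g m = (\<Prod>v\<in>K. g v ^ lookup m v)"
  unfolding subst_monom_def by (rule prod.mono_neutral_left) (auto simp: in_keys_iff)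

lemma subst_monom_zero [simp]: "subst_monom g 0 = 1"
  by (simp add: subst_monom_def)

lemma subst_monom_add: "subst_monom g (a + b) = subst_monom g a * subst_monom g b"
proof -
  let ?K = "keys a \<union> keys b"
  have "subst_monom g (a + b) = (\<Prod>v\<in>?K. g v ^ lookup (a + b) v)"
    by (rule subst_monom_superset) (auto dest: subsetD[OF keys_add])
  also have "\<dots> = (\<Prod>v\<in>?K. g v ^ lookup a v) * (\<Prod>v\<in>?K. g v ^ lookup b v)"
    by (simp add: lookup_add power_add prod.distrib)
  finally show ?thesis
    by (simp add: subst_monom_superset[symmetric])
qed

lemma subst_monom_Var: "subst_monom Var m = (single m 1 :: 'k::comm_ring_1 mpoly)"
  by (simp add: subst_monom_def Var_power prod_single_one sum_single_lookup)

lemma subst_eq_sum_superset: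
  assumes "finite K" "keys f \<subseteq> K"
  shows "subst g f = (\<Sum>m\<in>K. Const (lookup f m) * subst_monom g m)"
  unfolding subst_def subst_monom_def[symmetric]
  by (rule sum.mono_neutral_left) (use assms in \<open>auto simp: in_keys_iff\<close>)

lemma lookup_subst: "lookup (subst g f) m = (\<Sum>n\<in>keys f. lookup f n * lookup (subst_monom g n) m)"
  unfolding subst_def subst_monom_def[symmetric] by (simp add: lookup_sum lookup_Const_mult)

lemma subst_zero [simp]: "subst g 0 = 0"
  by (simp add: subst_def)

lemma subst_single: "subst g (single n c) = Const c * subst_monom g n"
  by (subst subst_eq_sum_superset[of "{n}"]) auto

lemma subst_add: "subst g (f1 + f2) = subst g f1 + subst g f2"
proof -
  let ?K = "keys f1 \<union> keys f2"
  have "subst g (f1 + f2) = (\<Sum>m\<in>?K. Const (lookup (f1 + f2) m) * subst_monom g m)"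
    by (rule subst_eq_sum_superset) (auto dest: subsetD[OF keys_add])
  also have "\<dots> = (\<Sum>m\<in>?K. Const (lookup f1 m) * subst_monom g m)
                  + (\<Sum>m\<in>?K. Const (lookup f2 m) * subst_monom g m)"
    by (simp add: lookup_add Const_add distrib_right sum.distrib)
  finally show ?thesis
    by (simp add: subst_eq_sum_superset[symmetric])
qed

lemma subst_diff: "subst g (f1 - f2) = subst g f1 - subst g f2"
  using subst_add[of g "f1 - f2" f2] by (simp add: algebra_simps)

lemma subst_sum: "subst g (\<Sum>i\<in>I. F i) = (\<Sum>i\<in>I. subst g (F i))"
  by (induction I rule: infinite_finite_induct) (simp_all add: subst_add)

lemma subst_mult: "subst g (f1 * f2) = subst g f1 * subst g f2"
proof -
  have "f1 * f2 = (\<Sum>a\<in>keys f1. single a (lookup f1 a)) * (\<Sum>b\<in>keys f2. single b (lookup f2 b))"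
    by (simp add: sum_single_lookup)
  also have "\<dots> = (\<Sum>a\<in>keys f1. \<Sum>b\<in>keys f2. single (a + b) (lookup f1 a * lookup f2 b))"
    by (simp add: sum_product mult_single)
  finally have "subst g (f1 * f2) = (\<Sum>a\<in>keys f1. \<Sum>b\<in>keys f2.
      Const (lookup f1 a) * subst_monom g a * (Const (lookup f2 b) * subst_monom g b))"
    by (simp add: subst_sum subst_single subst_monom_add Const_mult algebra_simps)
  also have "\<dots> = subst g f1 * subst g f2"
    by (simp add: subst_def subst_monom_def sum_product)
  finally show ?thesis .
qed

lemma subst_Const: "subst g (Const c) = Const c"
  by (simp add: Const_def subst_single)

lemma subst_one: "subst g 1 = 1"
  using subst_Const[of g 1] by simp

lemma subst_Var: "subst g (Var v) = g v"
  by (simp add: Var_def subst_single subst_monom_def)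

lemma subsVar_mult_Var_power: "subst g (f ^ k) = subst g f ^ k"
  by (induction k) (simp_all add: subst_one subst_mult)

lemma subst_prod: "subst g (\<Prod>i\<in>I. F i) = (\<Prod>i\<in>I. subst g (F i))"
  by (induction I rule: infinite_finite_induct) (simp_all add: subst_one subst_mult)

lemma subst_subst: "subst g (subst h f) = subst (\<lambda>v. subst g (h v)) f"
proof -
  have "subst h f = (\<Sum>m\<in>keys f. Const (lookup f m) * subst_monom h m)"
    by (simp add: subst_def subst_monom_def)
  then have "subst g (subst h f) = (\<Sum>m\<in>keys f. Const (lookup f m) * subst_monom (\<lambda>v. subst g (h v)) m)"
    by (simp add: subst_sum subst_mult subst_Const subst_monom_def subst_prod subsVar_mult_Var_power)
  then show ?thesis
    by (simp add: subst_def subst_monom_def)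
qed

locale subring_set =
  fixes R :: "'a::comm_ring_1 set"
  assumes one_mem: "1 \<in> R"
    and diff_mem: "a \<in> R \<Longrightarrow> b \<in> R \<Longrightarrow> a - b \<in> R"
    and mult_mem: "a \<in> R \<Longrightarrow> b \<in> R \<Longrightarrow> a * b \<in> R"
begin

lemma zero_mem: "0 \<in> R"
  using diff_mem[OF one_mem one_mem] by simp

lemma add_mem: "a \<in> R \<Longrightarrow> b \<in> R \<Longrightarrow> a + b \<in> R"
  using diff_mem[of a "0 - b"] diff_mem[OF zero_mem] by simp

lemma sum_mem: "(\<And>i. i \<in> I \<Longrightarrow> F i \<in> R) \<Longrightarrow> (\<Sum>i\<in>I. F i) \<in> R"
  by (induction I rule: infinite_finite_induct) (simp_all add: zero_mem add_mem)

lemma power_mem: "a \<in> R \<Longrightarrow> a ^ k \<in> R"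
  by (induction k) (simp_all add: one_mem mult_mem)

lemma prod_mem: "(\<And>i. i \<in> I \<Longrightarrow> F i \<in> R) \<Longrightarrow> (\<Prod>i\<in>I. F i) \<in> R"
  by (induction I rule: infinite_finite_induct) (simp_all add: one_mem mult_mem)

lemma power_sum_mem:
  assumes "x + y \<in> R" "x * y \<in> R"
  shows "x ^ k + y ^ k \<in> R"
proof -
  have "x ^ k + y ^ k \<in> R \<and> x ^ Suc k + y ^ Suc k \<in> R" for k
  proof (induction k)
    case 0
    show ?case using add_mem[OF one_mem one_mem] assms by simp
  next
    case (Suc k)
    have "x ^ Suc (Suc k) + y ^ Suc (Suc k) = (x + y) * (x ^ Suc k + y ^ Suc k) - x * y * (x ^ k + y ^ k)"
      by (simp add: algebra_simps)
    then show ?case using Suc assms by (simp add: diff_mem mult_mem)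
  qed
  then show ?thesis by blast
qed

lemma mulVar_mult_Var_power_mem:
  assumes "x + y \<in> R" "x * y \<in> R" "a \<in> R" "a * y \<in> R"
  shows "a * x ^ c * y ^ e \<in> R"
proof -
  have "a * y ^ e \<in> R \<and> a * y ^ Suc e \<in> R" for e
  proof (induction e)
    case 0
    show ?case using assms by simp
  next
    case (Suc e)
    have "a * y ^ Suc (Suc e) = (x + y) * (a * y ^ Suc e) - x * y * (a * y ^ e)"
      by (simp add: algebra_simps)
    then show ?case using Suc assms by (simp add: diff_mem mult_mem)
  qed
  then have base: "a * y ^ e \<in> R" for e
    by blast
  show ?thesis
  proof (induction c arbitrary: e)
    case 0
    show ?case using base by simp
  next
    case (Suc c)
    have "a * x ^ Suc c * y ^ e = (x + y) * (a * x ^ c * y ^ e) - a * x ^ c * y ^ Suc e"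
      by (simp add: algebra_simps)
    also have "\<dots> \<in> R"
      by (rule diff_mem[OF mult_mem[OF assms(1) Suc.IH] Suc.IH])
    finally show ?case .
  qed
qed

end

lemma subring_set_subst_image:
  assumes "subring_set R"
  shows "subring_set (subst g ` R)"
proof -
  interpret R: subring_set R by (fact assms)
  show ?thesis
  proof
    show "1 \<in> subst g ` R"
      using imageI[OF R.one_mem, of "subst g"] by (simp add: subst_one)
  next
    fix a b assume "a \<in> subst g ` R" "b \<in> subst g ` R"
    then obtain a' b' where R: "a' \<in> R" "b' \<in> R" and ab: "a = subst g a'" "b = subst g b'"
      by blast
    show "a - b \<in> subst g ` R"
      using imageI[OF R.diff_mem[OF R], of "subst g"] by (simp add: ab subst_diff)
    show "a * b \<in> subst g ` R"
      using imageI[OF R.mult_mem[OF R], of "subst g"] by (simp add: ab subst_mult)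
  qed
qed

lemma subring_set_polys_in: "subring_set (polys_in V)"
proof
  show "1 \<in> polys_in V"
    by (simp add: polys_in_def)
next
  fix a b :: "'a mpoly"
  assume a: "a \<in> polys_in V" and b: "b \<in> polys_in V"
  show "a - b \<in> polys_in V"
    unfolding polys_in_def
  proof (intro CollectI ballI)
    fix m assume "m \<in> keys (a - b)"
    then have "m \<in> keys a \<union> keys b" by (rule subsetD[OF keys_diff])
    then show "keys m \<subseteq> V" using a b by (auto simp: polys_in_def)
  qed
  show "a * b \<in> polys_in V"
    unfolding polys_in_def
  proof (intro CollectI ballI)
    fix m assume "m \<in> keys (a * b)"
    then have "m \<in> {m1 + m2 | m1 m2. m1 \<in> keys a \<and> m2 \<in> keys b}"
      by (rule subsetD[OF keys_mult])
    then obtain m1 m2 where "m = m1 + m2" "m1 \<in> keys a" "m2 \<in> keys b"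
      by blast
    moreover have "keys (m1 + m2) \<subseteq> keys m1 \<union> keys m2"
      by (rule keys_add)
    ultimately show "keys m \<subseteq> V" using a b by (auto simp: polys_in_def)
  qed
qed

interpretation polys_in: subring_set "polys_in V" for V
  by (fact subring_set_polys_in)

interpretation algA: subring_set "algA p" for p
  unfolding algA_def by (intro subring_set_subst_image subring_set_polys_in)

section \<open>Monomials in \<open>A\<close>\<close>

lemma phi_gen_in_algA: "i \<in> {1..2*p} \<Longrightarrow> phi_gen p i \<in> algA p"
  unfolding algA_def
  by (rule image_eqI[of _ _ "Var i"]) (simp add: subst_Var, simp add: polys_in_def Var_def)

lemma Var_in_algA:
  assumes "i \<in> {1..p-1}"
  shows "Var i \<in> algA p"
proof -
  have "phi_gen p i \<in> algA p"
    using assms by (intro phi_gen_in_algA) auto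
  then show ?thesis
    using assms by (simp add: phi_gen_def)
qed

lemma Var_add_Var0_in_algA:
  assumes "1 \<le> p"
  shows "Var p + Var 0 \<in> algA p"
proof -
  have "phi_gen p p \<in> algA p"
    using assms by (intro phi_gen_in_algA) auto
  moreover have "\<not> p \<le> p - 1"
    using assms by simp
  ultimately show ?thesis
    by (simp add: phi_gen_def)
qed

lemma Var_mult_Var0_in_algA:
  assumes "i \<in> {1..p}"
  shows "Var i * Var 0 \<in> algA p"
proof -
  have "phi_gen p (i + p) \<in> algA p"
    using assms by (intro phi_gen_in_algA) auto
  moreover have "\<not> i + p \<le> p - 1" "i + p \<noteq> p"
    using assms by auto
  ultimately show ?thesis
    using assms by (simp add: phi_gen_def)
qed

lemma phi_gen_in_polys_in: "phi_gen p i \<in> polys_in {0..p}"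
proof -
  have "Var v \<in> polys_in {0..p}" if "v \<le> p" for v
    using that by (simp add: polys_in_def Var_def)
  then show ?thesis
    unfolding phi_gen_def by (auto intro!: polys_in.add_mem polys_in.mult_mem polys_in.zero_mem)
qed

lemma subst_in_polys_in: "(\<And>v. g v \<in> polys_in V) \<Longrightarrow> subst g f \<in> polys_in V"
  unfolding subst_def
  by (intro polys_in.sum_mem polys_in.mult_mem polys_in.prod_mem polys_in.power_mem)
     (auto simp: polys_in_def Const_def)

lemma algA_subset_polys_in: "algA p \<subseteq> polys_in {0..p}"
  unfolding algA_def using subst_in_polys_in phi_gen_in_polys_in by blast

lemma single_in_algA:
  assumes i: "i \<in> {1..p-1}" and m: "keys m \<subseteq> {0..p}" "0 < lookup m i"
  shows "single m 1 \<in> algA p"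
proof -
  have ne: "i \<noteq> 0" "i \<noteq> p" "p \<noteq> 0"
    using i by auto
  define n where "n = m - single i 1 - single p (lookup m p) - single 0 (lookup m 0)"
  have m_eq: "m = n + single i 1 + single p (lookup m p) + single 0 (lookup m 0)"
    using i m(2) by (intro poly_mapping_eqI) (auto simp: n_def lookup_add lookup_minus lookup_single when_def)
  have "keys n \<subseteq> {1..p-1}"
  proof
    fix v assume "v \<in> keys n"
    then have "v \<in> keys m" "v \<noteq> p" "v \<noteq> 0"
      using ne by (auto simp: n_def in_keys_iff lookup_minus lookup_single when_def split: if_splits)
    then show "v \<in> {1..p-1}" using m(1) by force
  qed
  then have "single n 1 \<in> algA p"
    unfolding subst_monom_Var[symmetric] subst_monom_def
    by (intro algA.prod_mem algA.power_mem Var_in_algA) auto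
  moreover have "Var i * Var p ^ lookup m p * Var 0 ^ lookup m 0 \<in> algA p"
    using i by (intro algA.mulVar_mult_Var_power_mem Var_add_Var0_in_algA Var_in_algA Var_mult_Var0_in_algA) auto
  ultimately have "single n 1 * (Var i * Var p ^ lookup m p * Var 0 ^ lookup m 0) \<in> algA p"
    by (rule algA.mult_mem)
  also have "single n 1 * (Var i * Var p ^ lookup m p * Var 0 ^ lookup m 0)
      = single (n + single i 1 + single p (lookup m p) + single 0 (lookup m 0)) 1"
    by (simp only: Var_power, simp add: Var_def mult_single add.assoc)
  also have "\<dots> = single m 1"
    by (simp only: m_eq[symmetric])
  finally show ?thesis .
qed

section \<open>Monomial orders and leading monomials\<close>

lemma keys_add_subset: "keys a \<subseteq> V \<Longrightarrow> keys b \<subseteq> V \<Longrightarrow> keys (a + b) \<subseteq> V"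
  using keys_add[of a b] by blast

context
  fixes V :: "nat set" and le :: "(nat \<Rightarrow>\<^sub>0 nat) \<Rightarrow> (nat \<Rightarrow>\<^sub>0 nat) \<Rightarrow> bool"
  assumes mo: "monomial_order V le"
begin

lemma monomial_order_refl:
  assumes "keys a \<subseteq> V"
  shows "le a a"
proof -
  have "\<forall>a\<in>{m. keys m \<subseteq> V}. le a a"
    using mo unfolding monomial_order_def Let_def by (elim conjE) assumption
  then show ?thesis using assms by blast
qed

lemma monomial_order_antisym:
  assumes "keys a \<subseteq> V" "keys b \<subseteq> V" "le a b" "le b a"
  shows "a = b"
proof -
  have "\<forall>a\<in>{m. keys m \<subseteq> V}. \<forall>b\<in>{m. keys m \<subseteq> V}. le a b \<and> le b a \<longrightarrow> a = b"
    using mo unfolding monomial_order_def Let_def by (elim conjE) assumption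
  then show ?thesis using assms by blast
qed

lemma monomial_order_trans:
  assumes "keys a \<subseteq> V" "keys b \<subseteq> V" "keys c \<subseteq> V" "le a b" "le b c"
  shows "le a c"
proof -
  have "\<forall>a\<in>{m. keys m \<subseteq> V}. \<forall>b\<in>{m. keys m \<subseteq> V}. \<forall>c\<in>{m. keys m \<subseteq> V}.
      le a b \<and> le b c \<longrightarrow> le a c"
    using mo unfolding monomial_order_def Let_def by (elim conjE) assumption
  then show ?thesis using assms by blast
qed

lemma monomial_order_linear:
  assumes "keys a \<subseteq> V" "keys b \<subseteq> V"
  shows "le a b \<or> le b a"
proof -
  have "\<forall>a\<in>{m. keys m \<subseteq> V}. \<forall>b\<in>{m. keys m \<subseteq> V}. le a b \<or> le b a"
    using mo unfolding monomial_order_def Let_def by (elim conjE) assumption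
  then show ?thesis using assms by blast
qed

lemma monomial_order_add_right:
  assumes "keys a \<subseteq> V" "keys b \<subseteq> V" "keys c \<subseteq> V" "le a b"
  shows "le (a + c) (b + c)"
proof -
  have "\<forall>a\<in>{m. keys m \<subseteq> V}. \<forall>b\<in>{m. keys m \<subseteq> V}. \<forall>c\<in>{m. keys m \<subseteq> V}.
      le a b \<longrightarrow> le (a + c) (b + c)"
    using mo unfolding monomial_order_def Let_def by (elim conjE) assumption
  then show ?thesis using assms by blast
qed

lemma monomial_order_single_mono:
  assumes V: "v \<in> V" "w \<in> V" "keys n \<subseteq> V"
    and vw: "le (single v 1) (single w 1)"
  shows "le (single v k + n) (single w k + n)"
proof -
  have "le (single v k) (single w k)"
  proof (induction k)
    case 0
    show ?case using monomial_order_refl[of 0] by simp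
  next
    case (Suc k)
    have keys: "keys (single v k) \<subseteq> V" "keys (single w k) \<subseteq> V"
      "keys (single v 1) \<subseteq> V" "keys (single w 1) \<subseteq> V"
      using V by auto
    have 1: "le (single v k + single v 1) (single w k + single v 1)"
      by (rule monomial_order_add_right[OF keys(1,2,3) Suc])
    have 2: "le (single w k + single v 1) (single w k + single w 1)"
      using monomial_order_add_right[OF keys(3,4,2) vw] by (simp add: add.commute)
    have "le (single v k + single v 1) (single w k + single w 1)"
      by (rule monomial_order_trans[OF _ _ _ 1 2]) (intro keys_add_subset keys)+
    then show ?case
      by (simp add: single_add[symmetric])
  qed
  then show ?thesis
    using V by (intro monomial_order_add_right) auto
qed

lemma monomial_order_le_swap:
  assumes V: "v \<in> V" "w \<in> V" "keys m \<subseteq> V"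
    and vw: "le (single v 1) (single w 1)" and exps: "lookup m w \<le> lookup m v"
  shows "le m (Poly_Mapping.map_key (Transposition.transpose v w) m)"
proof -
  define k where "k = lookup m v - lookup m w"
  define n where "n = m - single v k"
  have "keys n \<subseteq> keys m"
    by (auto simp: n_def in_keys_iff lookup_minus)
  then have "le (single v k + n) (single w k + n)"
    using V by (intro monomial_order_single_mono[OF _ _ _ vw]) auto
  moreover have "single v k + n = m"
    using exps by (intro poly_mapping_eqI) (auto simp: k_def n_def lookup_add lookup_minus lookup_single when_def)
  moreover have "single w k + n = Poly_Mapping.map_key (Transposition.transpose v w) m"
    using exps
    by (intro poly_mapping_eqI)
      (auto simp: k_def n_def lookup_add lookup_minus lookup_single when_def map_key.rep_eq inj_transpose
        transpose_def)
  ultimately show ?thesis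
    by simp
qed

lemma ex_greatest_monomial:
  assumes S: "finite S" "S \<noteq> {}" "\<forall>m\<in>S. keys m \<subseteq> V"
  shows "\<exists>m\<in>S. \<forall>m'\<in>S. le m' m"
  using S
proof (induction S rule: finite_ne_induct)
  case (singleton x)
  then show ?case using monomial_order_refl by auto
next
  case (insert x S)
  have xV: "keys x \<subseteq> V" and SV: "\<forall>m\<in>S. keys m \<subseteq> V"
    using insert.prems by auto
  obtain z where z: "z \<in> S" "\<forall>y\<in>S. le y z"
    using insert.IH[OF SV] by blast
  have zV: "keys z \<subseteq> V"
    using SV z(1) by blast
  show ?case
  proof (cases "le x z")
    case True
    then show ?thesis using z by auto
  next
    case False
    then have "le z x"
      using monomial_order_linear[OF xV zV] by blast
    then have "\<forall>y\<in>S. le y x"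
      using z SV monomial_order_trans[OF _ zV xV] by blast
    then show ?thesis
      using monomial_order_refl[OF xV] by blast
  qed
qed

lemma lead_mon_eqI:
  assumes f: "f \<in> polys_in V"
    and m: "m \<in> keys f" "\<forall>m'\<in>keys f. le m' m"
  shows "lead_mon le f = m"
  unfolding lead_mon_def
proof (rule the_equality)
  fix m' assume "m' \<in> keys f \<and> (\<forall>m''\<in>keys f. le m'' m')"
  then show "m' = m"
    using m f monomial_order_antisym[of m' m] by (auto simp: polys_in_def)
qed (use m in blast)

lemma lead_mon_greatest:
  assumes f: "f \<in> polys_in V" "f \<noteq> 0"
  shows "lead_mon le f \<in> keys f" "m \<in> keys f \<Longrightarrow> le m (lead_mon le f)"
proof -
  obtain x where x: "x \<in> keys f" "\<forall>m\<in>keys f. le m x"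
    using ex_greatest_monomial[of "keys f"] f by (auto simp: polys_in_def)
  then show "lead_mon le f \<in> keys f" "m \<in> keys f \<Longrightarrow> le m (lead_mon le f)"
    using lead_mon_eqI[OF f(1) x] by auto
qed

lemma lead_mon_single:
  assumes V: "keys m \<subseteq> V" and c: "(c::'k::comm_ring_1) \<noteq> 0"
  shows "lead_mon le (single m c) = m"
proof (rule lead_mon_eqI)
  show "single m c \<in> polys_in V"
    using V c by (simp add: polys_in_def)
  show "m \<in> keys (single m c)"
    using c by simp
  show "\<forall>m'\<in>keys (single m c). le m' m"
    using c monomial_order_refl[OF V] by simp
qed

lemma single_in_init_mons:
  assumes "keys m \<subseteq> V" "single m (1::'k::comm_ring_1) \<in> A"
  shows "m \<in> init_mons le A"
proof -
  have "single m (1::'k) \<noteq> 0"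
    using lookup_single_eq[of m "1::'k"] by force
  then show ?thesis
    unfolding init_mons_def using assms lead_mon_single[OF assms(1), of "1::'k"]
    by (intro CollectI exI[of _ "single m 1"]) auto
qed

lemma lead_mon_single_add_single:
  assumes V: "keys a \<subseteq> V" "keys b \<subseteq> V"
    and "a \<noteq> b" "le b a"
  shows "lead_mon le (single a (1::'k::comm_ring_1) + single b 1) = a"
proof -
  have keys: "keys (single a (1::'k) + single b 1) = {a, b}"
    using \<open>a \<noteq> b\<close> by (auto simp: in_keys_iff lookup_add lookup_single when_def split: if_splits)
  show ?thesis
  proof (rule lead_mon_eqI)
    show "single a (1::'k) + single b 1 \<in> polys_in V"
      using V by (simp add: polys_in_def keys)
    show "a \<in> keys (single a (1::'k) + single b 1)"
      by (simp add: keys)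
    show "\<forall>m'\<in>keys (single a (1::'k) + single b 1). le m' a"
      using \<open>le b a\<close> monomial_order_refl[OF V(1)] by (simp add: keys)
  qed
qed

end

section \<open>Symmetry in \<open>u\<^sub>p\<close> and \<open>\<alpha>\<close>\<close>

definition kill_rename :: "nat set \<Rightarrow> (nat \<Rightarrow> nat) \<Rightarrow> nat \<Rightarrow> 'k::comm_ring_1 mpoly" where
  "kill_rename Z \<sigma> v = (if v \<in> Z then 0 else Var (\<sigma> v))"

lemma sum_single_rename:
  assumes "bij \<sigma>"
  shows "(\<Sum>v\<in>keys n. single (\<sigma> v) (lookup n v)) = Poly_Mapping.map_key (inv \<sigma>) n"
proof (rule poly_mapping_eqI)
  fix w
  have "inj (inv \<sigma>)"
    using assms by (simp add: bij_imp_bij_inv bij_is_inj)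
  then have "lookup (Poly_Mapping.map_key (inv \<sigma>) n) w = lookup n (inv \<sigma> w)"
    by (simp add: map_key.rep_eq)
  moreover have "lookup (\<Sum>v\<in>keys n. single (\<sigma> v) (lookup n v)) w
      = (\<Sum>v\<in>keys n. if v = inv \<sigma> w then lookup n v else 0)"
    using assms by (intro trans[OF lookup_sum sum.cong]) (auto simp: lookup_single when_def bij_inv_eq_iff)
  ultimately show "lookup (\<Sum>v\<in>keys n. single (\<sigma> v) (lookup n v)) w = lookup (Poly_Mapping.map_key (inv \<sigma>) n) w"
    by (simp add: in_keys_iff)
qed

lemma subst_monom_kill_rename:
  assumes "bij \<sigma>"
  shows "subst_monom (kill_rename Z \<sigma>) n
    = (if keys n \<inter> Z = {} then single (Poly_Mapping.map_key (inv \<sigma>) n) 1 else 0)"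
proof (cases "keys n \<inter> Z = {}")
  case True
  then have "subst_monom (kill_rename Z \<sigma>) n = (\<Prod>v\<in>keys n. single (single (\<sigma> v) (lookup n v)) 1)"
    unfolding subst_monom_def kill_rename_def by (intro prod.cong) (auto simp: Var_power)
  then show ?thesis
    using True by (simp add: prod_single_one sum_single_rename[OF assms])
next
  case False
  then obtain v where v: "v \<in> keys n" "v \<in> Z"
    by auto
  then have "kill_rename Z \<sigma> v ^ lookup n v = 0"
    by (simp add: kill_rename_def in_keys_iff power_0_left)
  then show ?thesis
    using False v unfolding subst_monom_def by (auto intro: prod_zero)
qed

lemma lookup_subst_kill_rename:
  assumes \<sigma>: "bij \<sigma>" "\<And>z. z \<in> Z \<Longrightarrow> \<sigma> z = z" and m: "keys m \<inter> Z = {}"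
  shows "lookup (subst (kill_rename Z \<sigma>) f) m = lookup f (Poly_Mapping.map_key \<sigma> m)"
proof -
  have inj: "inj \<sigma>" "inj (inv \<sigma>)"
    using \<sigma>(1) by (simp_all add: bij_is_inj bij_imp_bij_inv)
  have "keys n \<inter> Z = {} \<and> Poly_Mapping.map_key (inv \<sigma>) n = m \<longleftrightarrow> n = Poly_Mapping.map_key \<sigma> m" for n
  proof
    assume n: "keys n \<inter> Z = {} \<and> Poly_Mapping.map_key (inv \<sigma>) n = m"
    show "n = Poly_Mapping.map_key \<sigma> m"
      by (rule poly_mapping_eqI) (use n inj in \<open>auto simp: map_key.rep_eq inv_f_f\<close>)
  next
    assume n: "n = Poly_Mapping.map_key \<sigma> m"
    have "keys n \<inter> Z = {}"
      using m \<sigma>(2) inj by (auto simp: n map_key.rep_eq in_keys_iff)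
    moreover have "Poly_Mapping.map_key (inv \<sigma>) n = m"
      by (rule poly_mapping_eqI) (use n inj \<sigma>(1) in \<open>auto simp: map_key.rep_eq bij_is_surj surj_f_inv_f\<close>)
    ultimately show "keys n \<inter> Z = {} \<and> Poly_Mapping.map_key (inv \<sigma>) n = m" ..
  qed
  then have coeff: "lookup (subst_monom (kill_rename Z \<sigma>) n) m
      = (if n = Poly_Mapping.map_key \<sigma> m then 1 else 0)" for n
    by (auto simp: subst_monom_kill_rename[OF \<sigma>(1)] lookup_single when_def)
  have "lookup (subst (kill_rename Z \<sigma>) f) m
      = (\<Sum>n\<in>keys f. if n = Poly_Mapping.map_key \<sigma> m then lookup f n else 0)"
    unfolding lookup_subst coeff by (intro sum.cong) auto
  then show ?thesis
    by (simp add: in_keys_iff)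
qed

text \<open>After setting \<open>u\<^sub>1, \<dots>, u\<^sub>p\<^sub>-\<^sub>1\<close> to zero the generators of \<open>A\<close> become \<open>0\<close>, \<open>u\<^sub>p + \<alpha>\<close> and
  \<open>u\<^sub>p \<alpha>\<close>, which are symmetric in \<open>u\<^sub>p\<close> and \<open>\<alpha>\<close>.\<close>
lemma subst_kill_rename_phi_gen:
  assumes "1 \<le> p"
  shows "subst (kill_rename {1..p-1} (Transposition.transpose 0 p)) (phi_gen p v)
    = (subst (kill_rename {1..p-1} id) (phi_gen p v) :: 'k::comm_ring_1 mpoly)"
proof -
  have p: "p \<noteq> 0" "\<not> p \<le> p - 1"
    using assms by auto
  consider "1 \<le> v \<and> v \<le> p - 1" | "v = p" | "p + 1 \<le> v \<and> v < 2 * p" | "v = 2 * p"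
    | "\<not> (1 \<le> v \<and> v \<le> 2 * p)"
    by linarith
  then show ?thesis
  proof cases
    case 3
    then have "v - p \<in> {1..p-1}"
      by auto
    then show ?thesis
      using 3 by (simp add: phi_gen_def subst_Var subst_mult kill_rename_def)
  qed (use p in \<open>auto simp: phi_gen_def subst_Var subst_add subst_mult kill_rename_def ac_simps\<close>)
qed

lemma lookup_algA_swap:
  assumes p: "1 \<le> p" and f: "f \<in> algA p" and m: "keys m \<inter> {1..p-1} = {}"
  shows "lookup f (Poly_Mapping.map_key (Transposition.transpose 0 p) m) = lookup f m"
proof -
  obtain h where h: "f = subst (phi_gen p) h"
    using f unfolding algA_def by blast
  have "subst (kill_rename {1..p-1} (Transposition.transpose 0 p)) f = subst (kill_rename {1..p-1} id) f"
    unfolding h subst_subst subst_kill_rename_phi_gen[OF p] ..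
  moreover have "lookup (subst (kill_rename {1..p-1} (Transposition.transpose 0 p)) f) m
      = lookup f (Poly_Mapping.map_key (Transposition.transpose 0 p) m)"
    by (rule lookup_subst_kill_rename[OF bij_transpose _ m]) auto
  moreover have "lookup (subst (kill_rename {1..p-1} id) f) m = lookup f m"
    using lookup_subst_kill_rename[OF bij_id _ m, of f] map_key_id[of m] by (simp add: id_def)
  ultimately show ?thesis
    by simp
qed

lemma lead_mon_algA_exponents:
  assumes mo: "monomial_order {0..p} le" and le0p: "le (single 0 1) (single p 1)" and p: "1 \<le> p"
    and f: "f \<in> algA p" "f \<noteq> 0" and m: "keys (lead_mon le f) \<inter> {1..p-1} = {}"
  shows "lookup (lead_mon le f) 0 \<le> lookup (lead_mon le f) p"
proof (rule ccontr)
  let ?m = "lead_mon le f"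
  let ?m' = "Poly_Mapping.map_key (Transposition.transpose 0 p) ?m"
  assume gt: "\<not> lookup ?m 0 \<le> lookup ?m p"
  have fV: "f \<in> polys_in {0..p}"
    using f(1) algA_subset_polys_in by blast
  have mV: "keys ?m \<subseteq> {0..p}"
    using fV lead_mon_greatest(1)[OF mo fV f(2)] by (auto simp: polys_in_def)
  have "?m' \<in> keys f"
    using lookup_algA_swap[OF p f(1) m] lead_mon_greatest(1)[OF mo fV f(2)] by (simp add: in_keys_iff)
  then have le1: "le ?m' ?m" and m'V: "keys ?m' \<subseteq> {0..p}"
    using lead_mon_greatest(2)[OF mo fV f(2)] fV by (auto simp: polys_in_def)
  have "le ?m ?m'"
    using gt by (intro monomial_order_le_swap[OF mo _ _ mV le0p]) auto
  then have "?m' = ?m"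
    using monomial_order_antisym[OF mo m'V mV le1] by blast
  then have "lookup ?m' p = lookup ?m p"
    by simp
  then show False
    using gt by (simp add: map_key.rep_eq inj_transpose)
qed

lemma single_add_single_in_init_mons_algA:
  assumes mo: "monomial_order {0..p} le" and le0p: "le (single 0 1) (single p 1)" and p: "1 \<le> p"
    and "e \<le> c"
  shows "single p c + single 0 e \<in> init_mons le (algA p :: 'k::comm_ring_1 mpoly set)"
proof -
  have tA: "Var p * Var 0 \<in> (algA p :: 'k mpoly set)"
    using p by (intro Var_mult_Var0_in_algA) auto
  obtain k where c: "c = e + k"
    using \<open>e \<le> c\<close> le_Suc_ex by blast
  have aV: "keys (single p c + single 0 e) \<subseteq> {0..p}" and bV: "keys (single p e + single 0 c) \<subseteq> {0..p}"
    by (intro keys_add_subset; simp)+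
  show ?thesis
  proof (cases "k = 0")
    case True
    \<comment> \<open>here \<open>(u\<^sub>p \<alpha>)\<^sup>e (u\<^sub>p\<^sup>k + \<alpha>\<^sup>k) = 2 (u\<^sub>p \<alpha>)\<^sup>e\<close>, which vanishes in characteristic 2\<close>
    have "(Var p * Var 0) ^ e \<in> (algA p :: 'k mpoly set)"
      by (rule algA.power_mem[OF tA])
    then show ?thesis
      using True c by (intro single_in_init_mons[OF mo aV]) (simp add: Var_mult_Var_power)
  next
    case False
    let ?a = "single p c + single 0 e" and ?b = "single p e + single 0 c"
    let ?f = "(Var p * Var 0) ^ e * (Var p ^ k + Var 0 ^ k) :: 'k mpoly"
    have f_eq: "?f = single ?a 1 + single ?b 1"
      unfolding Var_mult_Var_power Var_power by (simp add: mult_single distrib_left c single_add ac_simps)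
    have "lookup ?a p \<noteq> lookup ?b p"
      using False p by (simp add: c lookup_add lookup_single)
    then have ab: "?a \<noteq> ?b"
      by metis
    have ba: "le ?b ?a"
    proof -
      have "keys (single p e + single 0 e) \<subseteq> {0..p}"
        by (intro keys_add_subset; simp)
      from monomial_order_single_mono[OF mo _ _ this le0p, of k] show ?thesis
        by (simp add: c single_add ac_simps)
    qed
    have "?f \<in> algA p"
      using p by (intro algA.mult_mem algA.power_mem algA.power_sum_mem tA Var_add_Var0_in_algA)
    moreover have "lookup ?f ?a = 1"
      using ab by (simp add: f_eq lookup_add lookup_single)
    then have "?f \<noteq> 0"
      by auto
    moreover have "lead_mon le ?f = ?a"
      unfolding f_eq by (rule lead_mon_single_add_single[OF mo aV bV ab ba])
    ultimately show ?thesis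
      unfolding init_mons_def by (intro CollectI exI[of _ ?f]) simp
  qed
qed

lemma single_add_single_in_init_mons_algA_iff:
  assumes mo: "monomial_order {0..p} le" and le0p: "le (single 0 1) (single p 1)" and p: "1 \<le> p"
  shows "single p c + single 0 e \<in> init_mons le (algA p :: 'k::comm_ring_1 mpoly set) \<longleftrightarrow> e \<le> c"
proof
  assume "single p c + single 0 e \<in> init_mons le (algA p :: 'k mpoly set)"
  then obtain f :: "'k mpoly" where f: "f \<in> algA p" "f \<noteq> 0" "lead_mon le f = single p c + single 0 e"
    unfolding init_mons_def by auto
  have "keys (lead_mon le f) \<inter> {1..p-1} = {}"
    using p by (auto simp: f(3) in_keys_iff lookup_add lookup_single when_def split: if_splits)
  then show "e \<le> c"
    using lead_mon_algA_exponents[OF mo le0p p f(1,2)] p by (simp add: f(3) lookup_add lookup_single)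
qed (rule single_add_single_in_init_mons_algA[OF mo le0p p])

section \<open>Counting initial monomials\<close>

lemma dim_monomials:
  "vector_space.dim (scale :: 'k::field \<Rightarrow> 'k mpoly \<Rightarrow> 'k mpoly) ((\<lambda>m. single m 1) ` T) = card T"
proof -
  interpret vector_space "scale :: 'k \<Rightarrow> 'k mpoly \<Rightarrow> 'k mpoly"
    by (rule vector_space_scale)
  have inj: "inj (\<lambda>m. single m (1::'k))"
    by (rule injI) (metis lookup_single_eq lookup_single_not_eq one_neq_zero)
  have "\<not> dependent ((\<lambda>m. single m (1::'k)) ` T)"
    unfolding dependent_explicit
  proof clarify
    fix t u v
    assume t: "finite t" "t \<subseteq> (\<lambda>m. single m (1::'k)) ` T" and sum: "(\<Sum>w\<in>t. scale (u w) w) = 0"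
      and v: "v \<in> t" "u v \<noteq> 0"
    obtain m where m: "v = single m 1"
      using t v by auto
    have "lookup w m = (if w = v then 1 else 0)" if "w \<in> t" for w
      using that t by (auto simp: m lookup_single when_def)
    then have "lookup (\<Sum>w\<in>t. scale (u w) w) m = (\<Sum>w\<in>t. if w = v then u w else 0)"
      by (auto simp: lookup_sum scale_def lookup_Const_mult intro!: sum.cong)
    then show False
      using sum t v by simp
  qed
  then show ?thesis
    by (simp add: dim_eq_card_independent card_image[OF inj_on_subset[OF inj subset_UNIV]])
qed

definition deg_monom :: "nat \<Rightarrow> (nat \<Rightarrow> nat) \<Rightarrow> nat \<Rightarrow> nat \<Rightarrow>\<^sub>0 nat" where
  "deg_monom p d e = (\<Sum>v\<in>{1..p-1}. single v (d v)) + single p (d p - e) + single 0 e"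

lemma lookup_deg_monom:
  assumes "1 \<le> p"
  shows "lookup (deg_monom p d e) v
    = (if v = 0 then e else if v = p then d p - e else if v \<in> {1..p-1} then d v else 0)"
  using assms by (auto simp: deg_monom_def lookup_add lookup_single when_def lookup_sum)

lemma keys_deg_monom: "1 \<le> p \<Longrightarrow> keys (deg_monom p d e) \<subseteq> {0..p}"
  by (auto simp: in_keys_iff lookup_deg_monom split: if_splits)

lemma monomials_of_mdeg:
  assumes p: "1 \<le> p"
  shows "{m. keys m \<subseteq> {0..p} \<and> (\<forall>i\<in>{1..p}. mdeg p m i = d i)} = deg_monom p d ` {..d p}"
proof (intro equalityI subsetI)
  fix m assume "m \<in> {m. keys m \<subseteq> {0..p} \<and> (\<forall>i\<in>{1..p}. mdeg p m i = d i)}"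
  then have keys: "keys m \<subseteq> {0..p}" and deg: "\<forall>i\<in>{1..p}. mdeg p m i = d i"
    by auto
  have "lookup m p + lookup m 0 = d p"
    using deg[rule_format, of p] p by (simp add: mdeg_def)
  moreover have "lookup m i = d i" if "i \<in> {1..p-1}" for i
  proof -
    have "i \<in> {1..p}" "i \<noteq> p"
      using that by auto
    then show ?thesis
      using deg[rule_format, of i] by (simp add: mdeg_def)
  qed
  moreover have "lookup m v = 0" if "p < v" for v
    using keys that by (auto simp: in_keys_iff)
  ultimately have "m = deg_monom p d (lookup m 0)" "lookup m 0 \<le> d p"
    using p by (auto intro!: poly_mapping_eqI simp: lookup_deg_monom not_less)
  then show "m \<in> deg_monom p d ` {..d p}"
    by blast
next
  fix m assume "m \<in> deg_monom p d ` {..d p}"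
  then show "m \<in> {m. keys m \<subseteq> {0..p} \<and> (\<forall>i\<in>{1..p}. mdeg p m i = d i)}"
    using p keys_deg_monom by (auto simp: mdeg_def lookup_deg_monom)
qed

lemma dim_init_part_mons:
  assumes "1 \<le> p"
  shows "vector_space.dim (scale :: 'k::field \<Rightarrow> 'k mpoly \<Rightarrow> 'k mpoly) (init_part_mons le A p d)
    = card {e. e \<le> d p \<and> deg_monom p d e \<in> init_mons le A}"
proof -
  let ?E = "{e. e \<le> d p \<and> deg_monom p d e \<in> init_mons le A}"
  have "init_part_mons le A p d
      = (\<lambda>m. single m 1) ` (init_mons le A \<inter> {m. keys m \<subseteq> {0..p} \<and> (\<forall>i\<in>{1..p}. mdeg p m i = d i)})"
    unfolding init_part_mons_def by blast
  also have "\<dots> = (\<lambda>m. single m 1) ` deg_monom p d ` ?E"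
    unfolding monomials_of_mdeg[OF assms] by blast
  finally have "init_part_mons le A p d = (\<lambda>m. single m 1) ` deg_monom p d ` ?E" .
  moreover have "inj_on (deg_monom p d) ?E"
    by (rule inj_onI) (metis assms lookup_deg_monom)
  ultimately show ?thesis
    by (simp add: dim_monomials card_image)
qed

lemma deg_monom_in_init_mons_algA:
  assumes mo: "monomial_order {0..p} le" and i: "i \<in> {1..p-1}" "0 < d i"
  shows "deg_monom p d e \<in> init_mons le (algA p :: 'k::comm_ring_1 mpoly set)"
proof -
  have p: "1 \<le> p" "i \<noteq> p"
    using i by auto
  have keys: "keys (deg_monom p d e) \<subseteq> {0..p}"
    by (rule keys_deg_monom[OF p(1)])
  have "0 < lookup (deg_monom p d e) i"
    using i p by (simp add: lookup_deg_monom)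
  then show ?thesis
    by (intro single_in_init_mons[OF mo keys] single_in_algA[OF i(1) keys])
qed

lemma deg_monom_in_init_mons_algA_iff:
  assumes mo: "monomial_order {0..p} le" and le0p: "le (single 0 1) (single p 1)" and p: "1 \<le> p"
    and d: "\<forall>i\<in>{1..p-1}. d i = 0"
  shows "deg_monom p d e \<in> init_mons le (algA p :: 'k::comm_ring_1 mpoly set) \<longleftrightarrow> e \<le> d p - e"
  using single_add_single_in_init_mons_algA_iff[OF mo le0p p] d by (simp add: deg_monom_def)

theorem corollary6p4:
  fixes le :: "(nat \<Rightarrow>\<^sub>0 nat) \<Rightarrow> (nat \<Rightarrow>\<^sub>0 nat) \<Rightarrow> bool"
    and p :: nat and d :: "nat \<Rightarrow> nat"
  assumes "p \<ge> 3"
    and "monomial_order {0..p} le"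
    and "le (Poly_Mapping.single 0 1) (Poly_Mapping.single p 1)"
  shows "vector_space.dim (scale :: 'k::field \<Rightarrow> 'k mpoly \<Rightarrow> 'k mpoly)
            (init_part_mons le (algA p :: 'k mpoly set) p d) =
         (if \<exists>i\<in>{1..p-1}. d i > 0 then d p + 1 else 1 + d p div 2)"
proof -
  have p: "1 \<le> p"
    using assms(1) by simp
  show ?thesis
  proof (cases "\<exists>i\<in>{1..p-1}. d i > 0")
    case True
    then obtain i where "i \<in> {1..p-1}" "0 < d i"
      by blast
    then have "{e. e \<le> d p \<and> deg_monom p d e \<in> init_mons le (algA p :: 'k mpoly set)} = {..d p}"
      using deg_monom_in_init_mons_algA[OF assms(2)] by auto
    then show ?thesis
      using True by (simp add: dim_init_part_mons[OF p])
  next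
    case False
    have "e \<le> d p \<and> e \<le> d p - e \<longleftrightarrow> e \<le> d p div 2" for e
      by presburger
    then have "{e. e \<le> d p \<and> deg_monom p d e \<in> init_mons le (algA p :: 'k mpoly set)} = {..d p div 2}"
      using False deg_monom_in_init_mons_algA_iff[OF assms(2,3) p] by auto
    then show ?thesis
      using False by (simp add: dim_init_part_mons[OF p])
  qed
qed

end
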